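(* Let $H\le G$ be finite groups, $Y$ an irreducible unitary representation of $H$, $Y^{\uparrow}=\bigoplus_t t\otimes Y$ the induced unitary representation, $V$ a $G$-subrepresentation of $Y^{\uparrow}$, and $E$ the orthogonal projection onto $e\otimes Y$. Then for every unit vector $\psi\in V$, $$\langle\psi|E\psi\rangle\le\frac{\dim V}{\dim Y^{\uparrow}}.$$
   Context: $Y^{\uparrow}=\mathbb{C}G\otimes_{\mathbb{C}H}Y$ with $t$ ranging over left coset representatives of $H$, equipped with the inner product making the subspaces $t\otimes Y$ pairwise orthogonal, each with the inner product of $Y$; it is then a unitary representation of $G$. *)

theory Defs
  imports "Jordan_Normal_Form.VS_Connect" "HOL-Algebra.Coset"
begin

text \<open>Finite-dimensional complex inner product spaces are modelled as
  complex column vectors of a fixed length with the standard Hermitian inner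
  product; the inner product of u and v (linear in the first argument) is
  u \<bullet>c v = sum of u_i * conj v_i.\<close>

definition unitary_mat :: "nat \<Rightarrow> complex mat \<Rightarrow> bool" where
  "unitary_mat d U \<longleftrightarrow> U \<in> carrier_mat d d \<and>
     (\<forall>v \<in> carrier_vec d. \<forall>w \<in> carrier_vec d. cscalar_prod (U *\<^sub>v v) (U *\<^sub>v w) = cscalar_prod v w)"

definition unitary_rep :: "('g, 'b) monoid_scheme \<Rightarrow> 'g set \<Rightarrow> nat \<Rightarrow> ('g \<Rightarrow> complex mat) \<Rightarrow> bool" where
  "unitary_rep G H d \<rho> \<longleftrightarrow>
     (\<forall>h \<in> H. unitary_mat d (\<rho> h)) \<and>
     (\<forall>h1 \<in> H. \<forall>h2 \<in> H. \<rho> (h1 \<otimes>\<^bsub>G\<^esub> h2) = \<rho> h1 * \<rho> h2)"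

abbreviation cvec_space :: "nat \<Rightarrow> (complex, complex vec) module" where
  "cvec_space N \<equiv> module_vec TYPE(complex) N"

definition is_subspace :: "nat \<Rightarrow> complex vec set \<Rightarrow> bool" where
  "is_subspace N W \<longleftrightarrow> subspace class_ring W (cvec_space N)"

definition subspace_dim :: "nat \<Rightarrow> complex vec set \<Rightarrow> nat" where
  "subspace_dim N W = vectorspace.dim class_ring ((cvec_space N)\<lparr>carrier := W\<rparr>)"

definition invariant_subspace :: "nat \<Rightarrow> 'g set \<Rightarrow> ('g \<Rightarrow> complex mat) \<Rightarrow> complex vec set \<Rightarrow> bool" where
  "invariant_subspace N K \<rho> W \<longleftrightarrow> is_subspace N W \<and> (\<forall>k \<in> K. \<forall>w \<in> W. \<rho> k *\<^sub>v w \<in> W)"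

definition irreducible_rep :: "'g set \<Rightarrow> nat \<Rightarrow> ('g \<Rightarrow> complex mat) \<Rightarrow> bool" where
  "irreducible_rep H d \<rho> \<longleftrightarrow> d > 0 \<and>
     (\<forall>W. invariant_subspace d H \<rho> W \<longrightarrow> W = {0\<^sub>v d} \<or> W = carrier_vec d)"

definition left_transversal :: "('g, 'b) monoid_scheme \<Rightarrow> 'g set \<Rightarrow> 'g list \<Rightarrow> bool" where
  "left_transversal G H ts \<longleftrightarrow> ts \<noteq> [] \<and> ts ! 0 = \<one>\<^bsub>G\<^esub> \<and> set ts \<subseteq> carrier G \<and>
     (\<forall>g \<in> carrier G. \<exists>!i. i < length ts \<and> g \<in> (ts ! i) <#\<^bsub>G\<^esub> H)"

text \<open>The induced representation Y\<up> = \<Oplus>_t t \<otimes> Y, realised on complex^(n*d)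
  where n = length ts: coordinate i*d + k is the k-th coordinate of the summand
  (ts!i) \<otimes> Y.  For g \<in> G, g (t_j \<otimes> y) = t_i \<otimes> \<rho>(h) y where g t_j = t_i h, h \<in> H.
  The standard inner product on complex^(n*d) makes the summands t \<otimes> Y
  pairwise orthogonal, each carrying the inner product of Y.\<close>
definition induced_mat :: "('g, 'b) monoid_scheme \<Rightarrow> 'g set \<Rightarrow> 'g list \<Rightarrow> nat \<Rightarrow> ('g \<Rightarrow> complex mat) \<Rightarrow> 'g \<Rightarrow> complex mat" where
  "induced_mat G H ts d \<rho> g = mat (length ts * d) (length ts * d) (\<lambda>(r, c).
     (let i = r div d; k = r mod d; j = c div d; l = c mod d in
      if g \<otimes>\<^bsub>G\<^esub> (ts ! j) \<in> (ts ! i) <#\<^bsub>G\<^esub> H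
      then \<rho> (inv\<^bsub>G\<^esub> (ts ! i) \<otimes>\<^bsub>G\<^esub> g \<otimes>\<^bsub>G\<^esub> (ts ! j)) $$ (k, l) else 0))"

definition proj_e :: "nat \<Rightarrow> nat \<Rightarrow> complex mat" where
  "proj_e n d = mat (n * d) (n * d) (\<lambda>(r, c). if r = c \<and> r < d then 1 else 0)"

end

theory Submission
  imports Defs "Jordan_Normal_Form.Spectral_Radius" "Jordan_Normal_Form.Gram_Schmidt"
begin

text \<open>Let P be the orthogonal projection onto V. Since the induced representation is unitary and
  V is invariant, P commutes with every Ind g. Its leading d \<times> d block (the compression of P to
  e \<otimes> Y) then commutes with the irreducible representation of H, so by Schur's lemma it is a
  scalar c; conjugating by the coset representatives shows that every diagonal entry of P equals c,
  and taking traces gives c = dim V / dim Y\<up>. Finally, for the component u = E \<psi> of a unit vector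
  \<psi> \<in> V we have \<langle>E\<psi>, \<psi>\<rangle> = |u|^2 = \<langle>P u, \<psi>\<rangle> and |P u|^2 = \<langle>P u, u\<rangle> = c |u|^2, so Cauchy--Schwarz
  yields |u|^4 \<le> c |u|^2.\<close>

lemma cscalar_prod_eq_sum: "dim_vec b = n \<Longrightarrow> a \<bullet>c b = (\<Sum>i<n. a $ i * cnj (b $ i))"
  unfolding scalar_prod_def by (auto simp: lessThan_atLeast0)

lemma cnj_cscalar_prod: "dim_vec a = dim_vec b \<Longrightarrow> cnj (a \<bullet>c b) = b \<bullet>c a"
  by (simp add: cscalar_prod_eq_sum[of _ "dim_vec b"] cscalar_prod_eq_sum[of b "dim_vec a" a] ac_simps)

lemma cscalar_prod_unit_vec_right:
  fixes v :: "complex vec"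
  assumes k: "k < n"
  shows "v \<bullet>c unit_vec n k = v $ k"
proof -
  have "v \<bullet>c unit_vec n k = (\<Sum>i<n. v $ i * cnj (unit_vec n k $ i))"
    by (rule cscalar_prod_eq_sum) simp
  also have "\<dots> = (\<Sum>i<n. if i = k then v $ k else 0)" using k by (intro sum.cong) auto
  finally show ?thesis using k by simp
qed

lemma cscalar_prod_unit_vec_left:
  fixes v :: "complex vec"
  shows "v \<in> carrier_vec n \<Longrightarrow> k < n \<Longrightarrow> unit_vec n k \<bullet>c v = cnj (v $ k)"
  using cnj_cscalar_prod[of v "unit_vec n k"] cscalar_prod_unit_vec_right[of k n v] by simp

lemma cscalar_prod_minus_left:
  fixes a b c :: "complex vec"
  assumes "a \<in> carrier_vec n" "b \<in> carrier_vec n" "c \<in> carrier_vec n"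
  shows "(a - b) \<bullet>c c = a \<bullet>c c - b \<bullet>c c"
  using minus_scalar_prod_distrib[of a n b "conjugate c"] assms by simp

lemma mult_mat_vec_index_sum:
  "A \<in> carrier_mat m n \<Longrightarrow> v \<in> carrier_vec n \<Longrightarrow> i < m \<Longrightarrow>
   (A *\<^sub>v v) $ i = (\<Sum>s<n. A $$ (i, s) * v $ s)"
  by (auto simp: scalar_prod_def lessThan_atLeast0)

lemma mult_mat_index_sum:
  "A \<in> carrier_mat m n \<Longrightarrow> B \<in> carrier_mat n p \<Longrightarrow> i < m \<Longrightarrow> j < p \<Longrightarrow>
   (A * B) $$ (i, j) = (\<Sum>s<n. A $$ (i, s) * B $$ (s, j))"
  by (auto simp: scalar_prod_def lessThan_atLeast0)

lemma mult_mat_vec_unit_vec: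
  fixes A :: "'a :: semiring_1 mat"
  shows "A \<in> carrier_mat m n \<Longrightarrow> i < m \<Longrightarrow> j < n \<Longrightarrow> (A *\<^sub>v unit_vec n j) $ i = A $$ (i, j)"
  by (simp add: carrier_matD)

lemma sum_lessThan_if_less:
  fixes k n :: nat
  assumes "k \<le> n"
  shows "(\<Sum>s<n. if s < k then f s else 0) = (\<Sum>s<k. f s)"
proof -
  have "{s \<in> {..<n}. s < k} = {..<k}" using assms by auto
  thus ?thesis using sum.inter_filter[of "{..<n}" f "\<lambda>s. s < k"] by simp
qed

lemma cscalar_prod_minus_smult_self:
  fixes a b :: "complex vec"
  assumes a: "a \<in> carrier_vec n" and b: "b \<in> carrier_vec n"
  shows "(a - of_real t \<cdot>\<^sub>v b) \<bullet>c (a - of_real t \<cdot>\<^sub>v b)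
           = a \<bullet>c a - of_real t * (b \<bullet>c a) - of_real t * (a \<bullet>c b) + of_real t ^ 2 * (b \<bullet>c b)"
proof -
  have "(a - of_real t \<cdot>\<^sub>v b) \<bullet>c (a - of_real t \<cdot>\<^sub>v b)
      = (\<Sum>i<n. a $ i * cnj (a $ i) - of_real t * (b $ i * cnj (a $ i))
                 - of_real t * (a $ i * cnj (b $ i)) + of_real t ^ 2 * (b $ i * cnj (b $ i)))"
    using a b by (auto simp: cscalar_prod_eq_sum[of _ n] power2_eq_square algebra_simps intro!: sum.cong)
  also have "\<dots> = a \<bullet>c a - of_real t * (b \<bullet>c a) - of_real t * (a \<bullet>c b) + of_real t ^ 2 * (b \<bullet>c b)"
    using a b by (simp add: cscalar_prod_eq_sum[of _ n] sum.distrib sum_subtractf sum_distrib_left)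
  finally show ?thesis .
qed

lemma cscalar_prod_real_sq_le:
  fixes w \<psi> :: "complex vec"
  assumes w: "w \<in> carrier_vec n" and \<psi>: "\<psi> \<in> carrier_vec n"
    and unit: "\<psi> \<bullet>c \<psi> = 1" and w\<psi>: "w \<bullet>c \<psi> = of_real s"
  shows "s\<^sup>2 \<le> Re (w \<bullet>c w)"
proof -
  have \<psi>w: "\<psi> \<bullet>c w = of_real s" using cnj_cscalar_prod[of w \<psi>] w\<psi> w \<psi> by simp
  have "0 \<le> (w - of_real s \<cdot>\<^sub>v \<psi>) \<bullet>c (w - of_real s \<cdot>\<^sub>v \<psi>)" by (rule conjugate_square_ge_0_vec)
  also have "\<dots> = w \<bullet>c w - of_real (s\<^sup>2)"
    unfolding cscalar_prod_minus_smult_self[OF w \<psi>] w\<psi> \<psi>w unit by (simp add: power2_eq_square)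
  finally show ?thesis by (simp add: less_eq_complex_def)
qed

lemma eq_mat_on_vecI:
  fixes A B :: "'a :: semiring_1 mat"
  assumes A: "A \<in> carrier_mat m n" and B: "B \<in> carrier_mat m n"
    and eq: "\<And>v. v \<in> carrier_vec n \<Longrightarrow> A *\<^sub>v v = B *\<^sub>v v"
  shows "A = B"
proof (rule eq_matI)
  fix i j assume "i < dim_row B" "j < dim_col B"
  hence i: "i < m" and j: "j < n" using B by auto
  show "A $$ (i, j) = B $$ (i, j)"
    using eq[of "unit_vec n j"] mult_mat_vec_unit_vec[OF A i j] mult_mat_vec_unit_vec[OF B i j] by simp
qed (use A B in auto)

lemma unitary_mat_idempotent_eq_one:
  assumes U: "unitary_mat d U" and idem: "U * U = U"
  shows "U = 1\<^sub>m d"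
proof (rule eq_mat_on_vecI)
  show Uc: "U \<in> carrier_mat d d" using U unfolding unitary_mat_def by simp
  fix x :: "complex vec" assume x: "x \<in> carrier_vec d"
  define z where "z = U *\<^sub>v x - x"
  have zc: "z \<in> carrier_vec d" unfolding z_def using Uc x by simp
  have "U *\<^sub>v z = (U * U) *\<^sub>v x - U *\<^sub>v x"
    unfolding z_def using Uc x by (simp add: mult_minus_distrib_mat_vec)
  hence "U *\<^sub>v z = 0\<^sub>v d" using idem Uc x by simp
  moreover have "z \<bullet>c z = (U *\<^sub>v z) \<bullet>c (U *\<^sub>v z)" using U zc unfolding unitary_mat_def by simp
  ultimately have "z \<bullet>c z = 0" by simp
  hence "z = 0\<^sub>v d" using zc by simp
  moreover have "U *\<^sub>v x = z + x" unfolding z_def using Uc x by (intro eq_vecI) auto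
  ultimately show "U *\<^sub>v x = 1\<^sub>m d *\<^sub>v x" using x by simp
qed simp

lemma unitary_mat_right_inverse_adjoint:
  assumes U: "unitary_mat d U" and W: "W \<in> carrier_mat d d" and inv: "U * W = 1\<^sub>m d"
    and x: "x \<in> carrier_vec d" and y: "y \<in> carrier_vec d"
  shows "(U *\<^sub>v x) \<bullet>c y = x \<bullet>c (W *\<^sub>v y)"
proof -
  have Uc: "U \<in> carrier_mat d d" using U unfolding unitary_mat_def by simp
  have "y = U *\<^sub>v (W *\<^sub>v y)" using Uc W y inv by (simp flip: assoc_mult_mat_vec)
  hence "(U *\<^sub>v x) \<bullet>c y = (U *\<^sub>v x) \<bullet>c (U *\<^sub>v (W *\<^sub>v y))" by simp
  also have "\<dots> = x \<bullet>c (W *\<^sub>v y)" using U x W y unfolding unitary_mat_def by simp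
  finally show ?thesis .
qed

lemma unitary_mat_right_inverse_index:
  assumes U: "unitary_mat d U" and W: "W \<in> carrier_mat d d" and inv: "U * W = 1\<^sub>m d"
    and k: "k < d" and l: "l < d"
  shows "W $$ (l, k) = cnj (U $$ (k, l))"
proof -
  have Uc: "U \<in> carrier_mat d d" using U unfolding unitary_mat_def by simp
  have "U $$ (k, l) = (U *\<^sub>v unit_vec d l) \<bullet>c unit_vec d k"
    using Uc k l by (simp add: cscalar_prod_unit_vec_right)
  also have "\<dots> = unit_vec d l \<bullet>c (W *\<^sub>v unit_vec d k)"
    by (rule unitary_mat_right_inverse_adjoint[OF U W inv]) simp_all
  also have "\<dots> = cnj (W $$ (l, k))"
    using W k l by (simp add: cscalar_prod_unit_vec_left)
  finally show ?thesis by simp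
qed

lemma is_subspace_closed:
  assumes "is_subspace N W"
  shows "W \<subseteq> carrier_vec N" and "0\<^sub>v N \<in> W"
    and "v \<in> W \<Longrightarrow> w \<in> W \<Longrightarrow> v + w \<in> W" and "v \<in> W \<Longrightarrow> c \<cdot>\<^sub>v v \<in> W"
proof -
  have sm: "submodule class_ring W (cvec_space N)"
    using assms unfolding is_subspace_def VectorSpace.subspace_def by auto
  show "W \<subseteq> carrier_vec N" using submodule.subset[OF sm] by (simp add: module_vec_simps)
  show "0\<^sub>v N \<in> W" using submodule.zero_closed[OF sm] by (simp add: module_vec_simps)
  show "v \<in> W \<Longrightarrow> w \<in> W \<Longrightarrow> v + w \<in> W"
    using submodule.m_closed[OF sm, of v w] by (simp add: module_vec_simps)
  show "v \<in> W \<Longrightarrow> c \<cdot>\<^sub>v v \<in> W"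
    using submodule.smult_closed[OF sm, of c v] by (simp add: module_vec_simps class_ring_simps)
qed

lemma is_subspace_eigenspace:
  assumes M: "M \<in> carrier_mat d d"
  shows "is_subspace d {y \<in> carrier_vec d. M *\<^sub>v y = c \<cdot>\<^sub>v y}"
  unfolding is_subspace_def VectorSpace.subspace_def submodule_def
proof (intro conjI allI impI vec_vs vec_module)
  fix x y
  assume "x \<in> {y \<in> carrier_vec d. M *\<^sub>v y = c \<cdot>\<^sub>v y}" "y \<in> {y \<in> carrier_vec d. M *\<^sub>v y = c \<cdot>\<^sub>v y}"
  thus "x \<oplus>\<^bsub>cvec_space d\<^esub> y \<in> {y \<in> carrier_vec d. M *\<^sub>v y = c \<cdot>\<^sub>v y}"
    by (auto simp: module_vec_simps mult_add_distrib_mat_vec[OF M] smult_add_distrib_vec[of _ d])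
next
  fix a :: complex and x assume "x \<in> {y \<in> carrier_vec d. M *\<^sub>v y = c \<cdot>\<^sub>v y}"
  thus "a \<odot>\<^bsub>cvec_space d\<^esub> x \<in> {y \<in> carrier_vec d. M *\<^sub>v y = c \<cdot>\<^sub>v y}"
    by (auto simp: module_vec_simps mult_mat_vec[OF M] smult_smult_assoc mult.commute)
qed (use M in \<open>auto simp: module_vec_simps\<close>)

lemma irreducible_rep_commutant_scalar:
  assumes irr: "irreducible_rep H d \<rho>" and \<rho>: "\<And>h. h \<in> H \<Longrightarrow> \<rho> h \<in> carrier_mat d d"
    and M: "M \<in> carrier_mat d d" and comm: "\<And>h. h \<in> H \<Longrightarrow> M * \<rho> h = \<rho> h * M"
  shows "\<exists>c. M = c \<cdot>\<^sub>m 1\<^sub>m d"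
proof -
  have "0 < d" using irr unfolding irreducible_rep_def by simp
  then obtain c where "c \<in> spectrum M" using spectrum_non_empty[OF M] by blast
  then obtain v where v: "v \<in> carrier_vec d" "v \<noteq> 0\<^sub>v d" "M *\<^sub>v v = c \<cdot>\<^sub>v v"
    unfolding spectrum_def eigenvalue_def eigenvector_def using M by auto
  define W where "W = {y \<in> carrier_vec d. M *\<^sub>v y = c \<cdot>\<^sub>v y}"
  have "invariant_subspace d H \<rho> W"
    unfolding invariant_subspace_def
  proof (intro conjI ballI)
    show "is_subspace d W" unfolding W_def by (rule is_subspace_eigenspace[OF M])
  next
    fix h w assume h: "h \<in> H" and w: "w \<in> W"
    have wc: "w \<in> carrier_vec d" and Mw: "M *\<^sub>v w = c \<cdot>\<^sub>v w" using w unfolding W_def by auto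
    have "M *\<^sub>v (\<rho> h *\<^sub>v w) = (M * \<rho> h) *\<^sub>v w" using M \<rho>[OF h] wc by simp
    also have "\<dots> = \<rho> h *\<^sub>v (M *\<^sub>v w)" using M \<rho>[OF h] wc comm[OF h] by simp
    also have "\<dots> = c \<cdot>\<^sub>v (\<rho> h *\<^sub>v w)" using \<rho>[OF h] wc Mw by (simp add: mult_mat_vec)
    finally show "\<rho> h *\<^sub>v w \<in> W" unfolding W_def using \<rho>[OF h] wc by simp
  qed
  moreover have "v \<in> W" unfolding W_def using v by simp
  ultimately have W: "W = carrier_vec d" using irr v(2) unfolding irreducible_rep_def by auto
  have "M = c \<cdot>\<^sub>m 1\<^sub>m d"
  proof (rule eq_matI)
    fix k l assume "k < dim_row (c \<cdot>\<^sub>m 1\<^sub>m d)" "l < dim_col (c \<cdot>\<^sub>m 1\<^sub>m d)"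
    hence k: "k < d" and l: "l < d" by auto
    have "unit_vec d l \<in> W" using W by simp
    hence "M *\<^sub>v unit_vec d l = c \<cdot>\<^sub>v unit_vec d l" unfolding W_def by simp
    hence "(M *\<^sub>v unit_vec d l) $ k = c * unit_vec d l $ k" using k by simp
    thus "M $$ (k, l) = (c \<cdot>\<^sub>m 1\<^sub>m d) $$ (k, l)" using M k l by simp
  qed (use M in auto)
  thus ?thesis ..
qed

locale orthogonal_basis =
  fixes N :: nat and V :: "complex vec set" and us :: "complex vec list"
  assumes subspace: "is_subspace N V" and basis_in: "set us \<subseteq> V" and orth: "corthogonal us"
    and complete:
      "\<And>z v. z \<in> carrier_vec N \<Longrightarrow> (\<forall>u\<in>set us. z \<bullet>c u = 0) \<Longrightarrow> v \<in> V \<Longrightarrow> z \<bullet>c v = 0"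
begin

lemmas V_closed = is_subspace_closed[OF subspace]

lemma basis_carrier: "a < length us \<Longrightarrow> us ! a \<in> carrier_vec N"
  by (intro subsetD[OF V_closed(1)] subsetD[OF basis_in] nth_mem)

lemma basis_dim[simp]: "a < length us \<Longrightarrow> dim_vec (us ! a) = N"
  by (rule carrier_vecD[OF basis_carrier])

lemma basis_norm_nonzero: "a < length us \<Longrightarrow> us ! a \<bullet>c us ! a \<noteq> 0"
  using orth unfolding corthogonal_def by auto

lemma basis_orthogonal: "a < length us \<Longrightarrow> b < length us \<Longrightarrow> a \<noteq> b \<Longrightarrow> us ! a \<bullet>c us ! b = 0"
  using orth unfolding corthogonal_def by auto

lemma basis_norm_real: "a < length us \<Longrightarrow> cnj (us ! a \<bullet>c us ! a) = us ! a \<bullet>c us ! a"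
  using cnj_cscalar_prod[of "us ! a" "us ! a"] by simp

definition proj :: "complex mat" where
  "proj = mat N N (\<lambda>(r, s). \<Sum>a<length us. us ! a $ r * cnj (us ! a $ s) / (us ! a \<bullet>c us ! a))"

definition coeff :: "complex vec \<Rightarrow> nat \<Rightarrow> complex" where
  "coeff x a = (x \<bullet>c us ! a) / (us ! a \<bullet>c us ! a)"

definition expansion :: "(nat \<Rightarrow> complex) \<Rightarrow> complex vec" where
  "expansion f = vec N (\<lambda>r. \<Sum>a<length us. f a * us ! a $ r)"

lemma proj_carrier[simp]: "proj \<in> carrier_mat N N"
  unfolding proj_def by simp

lemma proj_dims[simp]: "dim_row proj = N" "dim_col proj = N"
  unfolding proj_def by simp_all

lemma proj_mult_vec_carrier[simp]: "proj *\<^sub>v x \<in> carrier_vec N"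
  unfolding carrier_vec_def by simp

lemma proj_mult_vec: assumes x: "x \<in> carrier_vec N" shows "proj *\<^sub>v x = expansion (coeff x)"
proof (rule eq_vecI)
  fix r assume "r < dim_vec (expansion (coeff x))"
  hence r: "r < N" by (simp add: expansion_def)
  have "(proj *\<^sub>v x) $ r
      = (\<Sum>s<N. (\<Sum>a<length us. us ! a $ r * cnj (us ! a $ s) / (us ! a \<bullet>c us ! a)) * x $ s)"
    using mult_mat_vec_index_sum[OF proj_carrier x r] r by (simp add: proj_def)
  also have "\<dots> = (\<Sum>a<length us. \<Sum>s<N. us ! a $ r * cnj (us ! a $ s) / (us ! a \<bullet>c us ! a) * x $ s)"
    by (simp add: sum_distrib_right sum.swap[of _ "{..<N}"])
  also have "\<dots> = (\<Sum>a<length us. coeff x a * us ! a $ r)"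
    by (intro sum.cong refl) (auto simp: coeff_def cscalar_prod_eq_sum[of _ N] sum_distrib_left
        sum_divide_distrib ac_simps)
  finally show "(proj *\<^sub>v x) $ r = expansion (coeff x) $ r" using r by (simp add: expansion_def)
qed (simp add: expansion_def)

lemma expansion_in_V: "expansion f \<in> V"
proof -
  have "vec N (\<lambda>r. \<Sum>a<k. f a * us ! a $ r) \<in> V" if "k \<le> length us" for k
    using that
  proof (induction k)
    case 0
    then show ?case using V_closed(2) by (simp add: zero_vec_def)
  next
    case (Suc k)
    have "vec N (\<lambda>r. \<Sum>a<Suc k. f a * us ! a $ r)
        = vec N (\<lambda>r. \<Sum>a<k. f a * us ! a $ r) + f k \<cdot>\<^sub>v us ! k"
      using Suc.prems by (intro eq_vecI) auto
    moreover have "us ! k \<in> V" using Suc.prems basis_in by auto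
    ultimately show ?case using Suc V_closed(3,4) by simp
  qed
  thus ?thesis unfolding expansion_def by simp
qed

lemma cscalar_prod_expansion_left:
  assumes y: "y \<in> carrier_vec N"
  shows "expansion f \<bullet>c y = (\<Sum>a<length us. f a * (us ! a \<bullet>c y))"
proof -
  have "expansion f \<bullet>c y = (\<Sum>r<N. \<Sum>a<length us. f a * us ! a $ r * cnj (y $ r))"
    using y by (simp add: cscalar_prod_eq_sum[of _ N] expansion_def sum_distrib_right)
  also have "\<dots> = (\<Sum>a<length us. f a * (us ! a \<bullet>c y))"
    using y by (simp add: sum.swap[of _ "{..<N}"] cscalar_prod_eq_sum[of _ N] sum_distrib_left ac_simps)
  finally show ?thesis .
qed

lemma proj_in_V: "x \<in> carrier_vec N \<Longrightarrow> proj *\<^sub>v x \<in> V"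
  using proj_mult_vec expansion_in_V by simp

lemma proj_self_adjoint:
  assumes x: "x \<in> carrier_vec N" and y: "y \<in> carrier_vec N"
  shows "(proj *\<^sub>v x) \<bullet>c y = x \<bullet>c (proj *\<^sub>v y)"
proof -
  have "(proj *\<^sub>v x) \<bullet>c y = (\<Sum>a<length us. coeff x a * (us ! a \<bullet>c y))"
    using proj_mult_vec[OF x] cscalar_prod_expansion_left[OF y] by simp
  also have "\<dots> = cnj (\<Sum>a<length us. coeff y a * (us ! a \<bullet>c x))"
  proof -
    have "coeff x a * (us ! a \<bullet>c y) = cnj (coeff y a * (us ! a \<bullet>c x))" if a: "a < length us" for a
      using cnj_cscalar_prod[of "us ! a" x] cnj_cscalar_prod[of y "us ! a"] basis_norm_real[OF a] a x y
      by (simp add: coeff_def)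
    thus ?thesis by simp
  qed
  also have "\<dots> = cnj ((proj *\<^sub>v y) \<bullet>c x)"
    using proj_mult_vec[OF y] cscalar_prod_expansion_left[OF x] by simp
  also have "\<dots> = x \<bullet>c (proj *\<^sub>v y)" using cnj_cscalar_prod[of "proj *\<^sub>v y" x] x by simp
  finally show ?thesis .
qed

lemma proj_cscalar_prod_basis:
  assumes x: "x \<in> carrier_vec N" and b: "b < length us"
  shows "(proj *\<^sub>v x) \<bullet>c us ! b = x \<bullet>c us ! b"
proof -
  have "(proj *\<^sub>v x) \<bullet>c us ! b = (\<Sum>a<length us. coeff x a * (us ! a \<bullet>c us ! b))"
    using proj_mult_vec[OF x] cscalar_prod_expansion_left[OF basis_carrier[OF b]] by simp
  also have "\<dots> = (\<Sum>a<length us. if a = b then coeff x b * (us ! b \<bullet>c us ! b) else 0)"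
    using basis_orthogonal b by (intro sum.cong) auto
  finally show ?thesis using b basis_norm_nonzero[OF b] by (simp add: coeff_def)
qed

lemma proj_residual_orthogonal_basis:
  assumes x: "x \<in> carrier_vec N"
  shows "\<forall>u\<in>set us. (x - proj *\<^sub>v x) \<bullet>c u = 0"
proof
  fix u assume "u \<in> set us"
  then obtain b where b: "b < length us" and u: "u = us ! b" by (auto simp: in_set_conv_nth)
  show "(x - proj *\<^sub>v x) \<bullet>c u = 0"
    unfolding u using cscalar_prod_minus_left[OF x _ basis_carrier[OF b]] proj_cscalar_prod_basis[OF x b] x
    by simp
qed

lemma proj_fixes_V: assumes v: "v \<in> V" shows "proj *\<^sub>v v = v"
proof -
  have vc: "v \<in> carrier_vec N" using v V_closed(1) by auto
  define z where "z = v - proj *\<^sub>v v"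
  have zc: "z \<in> carrier_vec N" unfolding z_def using vc by simp
  have "z = v + (-1) \<cdot>\<^sub>v (proj *\<^sub>v v)" unfolding z_def using vc by (intro eq_vecI) auto
  hence "z \<in> V" using V_closed(3,4) v proj_in_V[OF vc] by simp
  hence "z \<bullet>c z = 0" using complete[OF zc] proj_residual_orthogonal_basis[OF vc] unfolding z_def by simp
  hence "z = 0\<^sub>v N" using zc by simp
  moreover have "v = z + proj *\<^sub>v v" unfolding z_def using vc by (intro eq_vecI) auto
  ultimately show ?thesis using vc by simp
qed

lemma proj_residual_orthogonal:
  assumes x: "x \<in> carrier_vec N" and v: "v \<in> V"
  shows "(x - proj *\<^sub>v x) \<bullet>c v = 0"
  using complete[of "x - proj *\<^sub>v x"] proj_residual_orthogonal_basis[OF x] x v by simp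

lemma proj_orthogonal_eq_0:
  assumes x: "x \<in> carrier_vec N" and perp: "\<forall>v\<in>V. x \<bullet>c v = 0"
  shows "proj *\<^sub>v x = 0\<^sub>v N"
proof -
  have "coeff x a = 0" if "a < length us" for a
  proof -
    have "us ! a \<in> V" using that basis_in by auto
    thus ?thesis unfolding coeff_def using perp by simp
  qed
  thus ?thesis using proj_mult_vec[OF x] by (auto simp: expansion_def)
qed

lemma trace_proj: "(\<Sum>r<N. proj $$ (r, r)) = of_nat (length us)"
proof -
  have "(\<Sum>r<N. proj $$ (r, r)) = (\<Sum>a<length us. (\<Sum>r<N. us ! a $ r * cnj (us ! a $ r)) / (us ! a \<bullet>c us ! a))"
    by (simp add: proj_def sum.swap[of _ "{..<N}"] sum_divide_distrib)
  also have "\<dots> = (\<Sum>a<length us. 1)"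
    using basis_carrier basis_norm_nonzero by (auto simp: cscalar_prod_eq_sum[of _ N] intro!: sum.cong)
  finally show ?thesis by simp
qed

lemma proj_commute:
  assumes A: "A \<in> carrier_mat N N" and B: "B \<in> carrier_mat N N"
    and adj: "\<And>x y. x \<in> carrier_vec N \<Longrightarrow> y \<in> carrier_vec N \<Longrightarrow> (A *\<^sub>v x) \<bullet>c y = x \<bullet>c (B *\<^sub>v y)"
    and AV: "\<And>v. v \<in> V \<Longrightarrow> A *\<^sub>v v \<in> V" and BV: "\<And>v. v \<in> V \<Longrightarrow> B *\<^sub>v v \<in> V"
  shows "A * proj = proj * A"
proof (rule eq_mat_on_vecI)
  fix x :: "complex vec" assume x: "x \<in> carrier_vec N"
  define w where "w = A *\<^sub>v (proj *\<^sub>v x)"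
  have wc: "w \<in> carrier_vec N" and wV: "w \<in> V" unfolding w_def using A x AV proj_in_V by auto
  have rc: "A *\<^sub>v x - w \<in> carrier_vec N" using A x wc by simp
  have "(A *\<^sub>v x - w) \<bullet>c v = 0" if v: "v \<in> V" for v
  proof -
    have vc: "v \<in> carrier_vec N" using v V_closed(1) by auto
    have "A *\<^sub>v x - w = A *\<^sub>v (x - proj *\<^sub>v x)" unfolding w_def using A x by (simp add: mult_minus_distrib_mat_vec)
    hence "(A *\<^sub>v x - w) \<bullet>c v = (x - proj *\<^sub>v x) \<bullet>c (B *\<^sub>v v)"
      using adj[of "x - proj *\<^sub>v x" v] x vc by simp
    thus ?thesis using proj_residual_orthogonal[OF x BV[OF v]] by simp
  qed
  hence "proj *\<^sub>v (A *\<^sub>v x - w) = 0\<^sub>v N" using proj_orthogonal_eq_0[OF rc] by blast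
  have "A *\<^sub>v x = w + (A *\<^sub>v x - w)" using wc A x by (intro eq_vecI) auto
  hence "proj *\<^sub>v (A *\<^sub>v x) = proj *\<^sub>v (w + (A *\<^sub>v x - w))" by (rule arg_cong)
  also have "\<dots> = proj *\<^sub>v w + proj *\<^sub>v (A *\<^sub>v x - w)"
    by (rule mult_add_distrib_mat_vec[OF proj_carrier wc rc])
  also have "\<dots> = w" using proj_fixes_V[OF wV] \<open>proj *\<^sub>v (A *\<^sub>v x - w) = 0\<^sub>v N\<close> wc by simp
  finally show "(A * proj) *\<^sub>v x = (proj * A) *\<^sub>v x" unfolding w_def
    using assoc_mult_mat_vec[OF A proj_carrier x] assoc_mult_mat_vec[OF proj_carrier A x] by simp
qed (use A in auto)

lemma leading_coordinates_weight_le: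
  assumes dN: "d \<le> N" and c: "0 \<le> c"
    and block: "\<And>k l. k < d \<Longrightarrow> l < d \<Longrightarrow> proj $$ (k, l) = (if k = l then of_real c else 0)"
    and \<psi>: "\<psi> \<in> V" and unit: "\<psi> \<bullet>c \<psi> = 1"
  shows "(\<Sum>r<d. (cmod (\<psi> $ r))\<^sup>2) \<le> c"
proof -
  define s where "s = (\<Sum>r<d. (cmod (\<psi> $ r))\<^sup>2)"
  define u where "u = vec N (\<lambda>r. if r < d then \<psi> $ r else 0)"
  define w where "w = proj *\<^sub>v u"
  have \<psi>c: "\<psi> \<in> carrier_vec N" using \<psi> V_closed(1) by auto
  have uc: "u \<in> carrier_vec N" and wc: "w \<in> carrier_vec N" unfolding u_def w_def by simp_all
  have s_sum: "of_real s = (\<Sum>r<d. \<psi> $ r * cnj (\<psi> $ r))"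
    unfolding s_def of_real_sum by (simp only: complex_norm_square)
  have w_lead: "w $ k = of_real c * \<psi> $ k" if k: "k < d" for k
  proof -
    have "w $ k = (\<Sum>s<N. if s < d then proj $$ (k, s) * \<psi> $ s else 0)"
      unfolding w_def using mult_mat_vec_index_sum[OF proj_carrier uc] k dN
      by (auto simp: u_def intro!: sum.cong)
    also have "\<dots> = (\<Sum>s<d. proj $$ (k, s) * \<psi> $ s)" by (rule sum_lessThan_if_less[OF dN])
    also have "\<dots> = (\<Sum>s<d. if s = k then of_real c * \<psi> $ k else 0)"
      using block k by (intro sum.cong) auto
    finally show ?thesis using k by simp
  qed
  have "u \<bullet>c \<psi> = (\<Sum>r<N. if r < d then \<psi> $ r * cnj (\<psi> $ r) else 0)"
    using \<psi>c by (auto simp: cscalar_prod_eq_sum[of _ N] u_def intro!: sum.cong)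
  hence u\<psi>: "u \<bullet>c \<psi> = of_real s" unfolding s_sum sum_lessThan_if_less[OF dN] .
  have "w \<bullet>c u = (\<Sum>r<N. if r < d then of_real c * (\<psi> $ r * cnj (\<psi> $ r)) else 0)"
    using uc by (auto simp: cscalar_prod_eq_sum[of _ N] u_def w_lead intro!: sum.cong)
  hence wu: "w \<bullet>c u = of_real c * of_real s"
    unfolding s_sum sum_lessThan_if_less[OF dN] by (simp add: sum_distrib_left)
  have ww: "w \<bullet>c w = of_real c * of_real s"
  proof -
    have "w \<bullet>c w = u \<bullet>c w"
      using proj_self_adjoint[OF uc wc] proj_fixes_V[OF proj_in_V[OF uc]] unfolding w_def by simp
    also have "\<dots> = cnj (w \<bullet>c u)" using cnj_cscalar_prod[of w u] uc wc by simp
    finally show ?thesis using wu by simp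
  qed
  have w\<psi>: "w \<bullet>c \<psi> = of_real s"
    using proj_self_adjoint[OF uc \<psi>c] proj_fixes_V[OF \<psi>] u\<psi> unfolding w_def by simp
  have "s\<^sup>2 \<le> c * s" using cscalar_prod_real_sq_le[OF wc \<psi>c unit w\<psi>] ww by simp
  moreover have "0 \<le> s" unfolding s_def by (simp add: sum_nonneg)
  ultimately show ?thesis using c unfolding s_def[symmetric]
    by (cases "s = 0") (auto simp: power2_eq_square)
qed

end

context
  fixes N :: nat
begin

interpretation VS: cof_vec_space N "TYPE(complex)" .

lemma subspace_basis_exists:
  assumes sub: "is_subspace N V"
  obtains A where "finite A" "A \<subseteq> V" "\<not> VS.lin_dep A" "VS.span A = V" "card A = subspace_dim N V"
proof -
  have subsp: "VectorSpace.subspace class_ring V VS.V" using sub unfolding is_subspace_def by simp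
  have submod: "submodule class_ring V VS.V" using subsp unfolding VectorSpace.subspace_def by auto
  define W where "W = VS.V\<lparr>carrier := V\<rparr>"
  interpret W: vectorspace class_ring W unfolding W_def by (rule VS.subspace_is_vs[OF subsp])
  have cW: "carrier W = V" unfolding W_def by simp
  have lin_dep: "W.lin_dep S = VS.lin_dep S" and span: "W.span S = VS.span S" if "S \<subseteq> V" for S
    unfolding W_def using VS.span_li_not_depend[OF that submod] by auto
  have bound: "finite S \<and> card S \<le> N" if "S \<subseteq> carrier W \<and> \<not> W.lin_dep S" for S
    using that VS.li_le_dim[OF VS.fin_dim, of S] VS.dim_is_n cW lin_dep is_subspace_closed(1)[OF sub]
    by auto
  have "{} \<subseteq> carrier W \<and> \<not> W.lin_dep {}" by (simp add: W.lin_dep_def)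
  then obtain A where A: "finite A" "maximal A (\<lambda>S. S \<subseteq> carrier W \<and> \<not> W.lin_dep S)"
    using maximal_exists[where P = "\<lambda>S. S \<subseteq> carrier W \<and> \<not> W.lin_dep S", OF bound] by blast
  have basis: "W.basis A" by (rule W.max_li_is_basis[OF A(2)])
  have AV: "A \<subseteq> V" using basis cW unfolding W.basis_def by auto
  show ?thesis
  proof (rule that[OF A(1) AV])
    show "\<not> VS.lin_dep A" and "VS.span A = V"
      using basis lin_dep[OF AV] span[OF AV] cW unfolding W.basis_def by auto
    show "card A = subspace_dim N V"
      unfolding subspace_dim_def W_def[symmetric] using W.dim_basis[OF A(1) basis] by simp
  qed
qed

lemma cscalar_prod_orthogonal_span:
  assumes us: "set us \<subseteq> carrier_vec N" and z: "z \<in> carrier_vec N"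
    and zu: "\<forall>u\<in>set us. z \<bullet>c u = 0" and v: "v \<in> VS.span (set us)"
  shows "z \<bullet>c v = 0"
proof -
  from v obtain a B where B: "v = VS.lincomb a B" "finite B" "B \<subseteq> set us"
    using VS.in_spanE by blast
  have Bc: "B \<subseteq> carrier_vec N" using B us by auto
  have "z \<bullet>c v = (\<Sum>i<N. z $ i * cnj (\<Sum>x\<in>B. a x * x $ i))"
    using Bc by (auto simp: cscalar_prod_eq_sum[of _ N] B(1) VS.lincomb_index[OF _ Bc] intro!: sum.cong)
  also have "\<dots> = (\<Sum>x\<in>B. cnj (a x) * (\<Sum>i<N. z $ i * cnj (x $ i)))"
    by (simp add: sum_distrib_left sum_distrib_right sum.swap[of _ B] ac_simps)
  also have "\<dots> = (\<Sum>x\<in>B. cnj (a x) * (z \<bullet>c x))"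
    using Bc by (intro sum.cong refl) (auto simp: cscalar_prod_eq_sum[of _ N])
  also have "\<dots> = 0" using zu B(3) by (auto intro!: sum.neutral)
  finally show ?thesis .
qed

lemma orthogonal_basis_exists:
  assumes sub: "is_subspace N V"
  obtains us where "orthogonal_basis N V us" and "length us = subspace_dim N V"
proof -
  obtain A where A: "finite A" "A \<subseteq> V" "\<not> VS.lin_dep A" "VS.span A = V" "card A = subspace_dim N V"
    using subspace_basis_exists[OF sub] .
  obtain ws where ws: "set ws = A" "distinct ws" using finite_distinct_list[OF A(1)] by blast
  define us where "us = gram_schmidt N ws"
  have "set ws \<subseteq> carrier_vec N" using ws A(2) is_subspace_closed(1)[OF sub] by auto
  note GS = VS.gram_schmidt_result[OF this ws(2) _ us_def]
  have span: "VS.span (set us) = V" and usc: "set us \<subseteq> carrier_vec N"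
    and orth: "corthogonal us" and len: "length us = subspace_dim N V"
    using GS A ws distinct_card[OF ws(2)] by auto
  have "set us \<subseteq> V" using VS.in_own_span[OF usc] span by auto
  moreover have "z \<bullet>c v = 0" if "z \<in> carrier_vec N" "\<forall>u\<in>set us. z \<bullet>c u = 0" "v \<in> V" for z v
    using cscalar_prod_orthogonal_span[OF usc that(1,2)] that(3) span by simp
  ultimately show ?thesis using that[OF _ len] orthogonal_basis.intro[OF sub _ orth] by blast
qed

end

lemma proj_e_mult_vec_index:
  assumes x: "x \<in> carrier_vec (n * d)" and r: "r < n * d"
  shows "(proj_e n d *\<^sub>v x) $ r = (if r < d then x $ r else 0)"
proof -
  have "(proj_e n d *\<^sub>v x) $ r = (\<Sum>s<n * d. proj_e n d $$ (r, s) * x $ s)"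
    by (rule mult_mat_vec_index_sum) (use x r in \<open>auto simp: proj_e_def\<close>)
  also have "\<dots> = (\<Sum>s<n * d. if s = r then (if r < d then x $ r else 0) else 0)"
    using r by (intro sum.cong) (auto simp: proj_e_def)
  finally show ?thesis using r by simp
qed

lemma cscalar_prod_proj_e:
  assumes x: "x \<in> carrier_vec (n * d)" and dN: "d \<le> n * d"
  shows "(proj_e n d *\<^sub>v x) \<bullet>c x = of_real (\<Sum>r<d. (cmod (x $ r))\<^sup>2)"
proof -
  have "(proj_e n d *\<^sub>v x) \<bullet>c x = (\<Sum>r<n * d. if r < d then x $ r * cnj (x $ r) else 0)"
    using x by (auto simp: cscalar_prod_eq_sum[of _ "n * d"] proj_e_mult_vec_index intro!: sum.cong)
  also have "\<dots> = (\<Sum>r<d. x $ r * cnj (x $ r))" by (rule sum_lessThan_if_less[OF dN])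
  also have "\<dots> = of_real (\<Sum>r<d. (cmod (x $ r))\<^sup>2)"
    unfolding of_real_sum by (simp only: complex_norm_square)
  finally show ?thesis .
qed

locale induced_rep = group G for G :: "('g, 'b) monoid_scheme" (structure) +
  fixes H :: "'g set" and d :: nat and \<rho> :: "'g \<Rightarrow> complex mat" and ts :: "'g list"
  assumes subgroup: "subgroup H G" and unitary: "unitary_rep G H d \<rho>"
    and transversal: "left_transversal G H ts"
begin

abbreviation "N \<equiv> length ts * d"
abbreviation "Ind \<equiv> induced_mat G H ts d \<rho>"

lemma subgroup_carrier: "h \<in> H \<Longrightarrow> h \<in> carrier G"
  using subgroup.subset[OF subgroup] by blast

lemma subgroup_mult_left_iff: "h \<in> H \<Longrightarrow> x \<in> carrier G \<Longrightarrow> h \<otimes> x \<in> H \<longleftrightarrow> x \<in> H"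
  by (metis subgroup subgroup.m_closed subgroup.m_inv_closed inv_solve_left subgroup_carrier m_closed)

lemma subgroup_mult_right_iff: "h \<in> H \<Longrightarrow> x \<in> carrier G \<Longrightarrow> x \<otimes> h \<in> H \<longleftrightarrow> x \<in> H"
  by (metis subgroup subgroup.m_closed subgroup.m_inv_closed inv_solve_right subgroup_carrier m_closed)

lemma subgroup_inv_iff: "x \<in> carrier G \<Longrightarrow> inv x \<in> H \<longleftrightarrow> x \<in> H"
  by (metis subgroup subgroup.m_inv_closed inv_inv)

lemma rep_carrier: "h \<in> H \<Longrightarrow> \<rho> h \<in> carrier_mat d d"
  using unitary unfolding unitary_rep_def unitary_mat_def by auto

lemma rep_unitary: "h \<in> H \<Longrightarrow> unitary_mat d (\<rho> h)"
  using unitary unfolding unitary_rep_def by auto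

lemma rep_mult: "a \<in> H \<Longrightarrow> b \<in> H \<Longrightarrow> \<rho> (a \<otimes> b) = \<rho> a * \<rho> b"
  using unitary unfolding unitary_rep_def by auto

lemma rep_one: "\<rho> \<one> = 1\<^sub>m d"
  using unitary_mat_idempotent_eq_one rep_unitary rep_mult subgroup.one_closed[OF subgroup] by force

lemma rep_inv_index:
  assumes h: "h \<in> H" and k: "k < d" and l: "l < d"
  shows "\<rho> (inv h) $$ (l, k) = cnj (\<rho> h $$ (k, l))"
proof (rule unitary_mat_right_inverse_index[OF rep_unitary[OF h] rep_carrier _ k l])
  show "inv h \<in> H" using h subgroup.m_inv_closed[OF subgroup] by blast
  thus "\<rho> h * \<rho> (inv h) = 1\<^sub>m d" using h rep_mult rep_one subgroup_carrier by (metis r_inv)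
qed

lemma transversal_carrier: "i < length ts \<Longrightarrow> ts ! i \<in> carrier G"
  using transversal unfolding left_transversal_def by auto

lemma transversal_first: "ts ! 0 = \<one>" and transversal_nonempty: "0 < length ts"
  using transversal unfolding left_transversal_def by auto

lemma l_coset_mem_iff:
  assumes a: "a \<in> carrier G" and x: "x \<in> carrier G"
  shows "x \<in> a <# H \<longleftrightarrow> inv a \<otimes> x \<in> H"
proof
  assume "x \<in> a <# H"
  then obtain h where h: "h \<in> H" "x = a \<otimes> h" unfolding l_coset_def by auto
  thus "inv a \<otimes> x \<in> H" using a subgroup_carrier[OF h(1)] by (simp add: m_assoc[symmetric])
next
  assume "inv a \<otimes> x \<in> H"
  moreover have "x = a \<otimes> (inv a \<otimes> x)" using a x by (simp add: m_assoc[symmetric])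
  ultimately show "x \<in> a <# H" unfolding l_coset_def by auto
qed

lemma transversal_unique:
  assumes "i < length ts" "j < length ts" "x \<in> carrier G"
    and "inv (ts ! i) \<otimes> x \<in> H" "inv (ts ! j) \<otimes> x \<in> H"
  shows "i = j"
  using transversal assms l_coset_mem_iff[OF transversal_carrier] unfolding left_transversal_def by metis

lemma transversal_in_subgroup_iff: "j < length ts \<Longrightarrow> ts ! j \<in> H \<longleftrightarrow> j = 0"
  using transversal_unique[of j 0 "ts ! j"] transversal_nonempty transversal_first transversal_carrier
    subgroup.one_closed[OF subgroup] by auto

lemma div_less_length: "r < N \<Longrightarrow> r div d < length ts"
  by (simp add: less_mult_imp_div_less)

lemma mod_less_dim: "r < N \<Longrightarrow> r mod d < d"
  by (cases "d = 0") auto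

lemma dim_le_N: "d \<le> N"
  using transversal_nonempty by (cases "length ts") auto

lemma induced_mat_carrier: "Ind g \<in> carrier_mat N N"
  by (simp add: induced_mat_def)

lemma induced_mat_dims[simp]: "dim_row (Ind g) = N" "dim_col (Ind g) = N"
  by (simp_all add: induced_mat_def)

lemma induced_mat_index:
  assumes g: "g \<in> carrier G" and r: "r < N" and s: "s < N"
  shows "Ind g $$ (r, s) = (if inv (ts ! (r div d)) \<otimes> g \<otimes> ts ! (s div d) \<in> H
     then \<rho> (inv (ts ! (r div d)) \<otimes> g \<otimes> ts ! (s div d)) $$ (r mod d, s mod d) else 0)"
proof -
  have t: "ts ! (r div d) \<in> carrier G" "ts ! (s div d) \<in> carrier G"
    using transversal_carrier div_less_length r s by auto
  have "g \<otimes> ts ! (s div d) \<in> ts ! (r div d) <# H \<longleftrightarrow> inv (ts ! (r div d)) \<otimes> g \<otimes> ts ! (s div d) \<in> H"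
    using l_coset_mem_iff[of "ts ! (r div d)" "g \<otimes> ts ! (s div d)"] t g by (simp add: m_assoc)
  thus ?thesis using r s unfolding induced_mat_def by (simp add: Let_def)
qed

lemma induced_mat_inv_index:
  assumes g: "g \<in> carrier G" and r: "r < N" and s: "s < N"
  shows "Ind (inv g) $$ (s, r) = cnj (Ind g $$ (r, s))"
proof -
  define a where "a = inv (ts ! (r div d)) \<otimes> g \<otimes> ts ! (s div d)"
  have t: "ts ! (r div d) \<in> carrier G" "ts ! (s div d) \<in> carrier G"
    using transversal_carrier div_less_length r s by auto
  have a: "a \<in> carrier G" unfolding a_def using t g by simp
  have inv_a: "inv (ts ! (s div d)) \<otimes> inv g \<otimes> ts ! (r div d) = inv a"
    unfolding a_def using t g by (simp add: inv_mult_group m_assoc)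
  show ?thesis
    using induced_mat_index[OF g r s] induced_mat_index[OF inv_closed[OF g] s r]
      rep_inv_index[of a, OF _ mod_less_dim[OF r] mod_less_dim[OF s]] subgroup_inv_iff[OF a]
    unfolding inv_a a_def[symmetric] by auto
qed

lemma induced_mat_adjoint:
  assumes g: "g \<in> carrier G" and x: "x \<in> carrier_vec N" and y: "y \<in> carrier_vec N"
  shows "(Ind g *\<^sub>v x) \<bullet>c y = x \<bullet>c (Ind (inv g) *\<^sub>v y)"
proof -
  have "(Ind g *\<^sub>v x) \<bullet>c y = (\<Sum>r<N. (Ind g *\<^sub>v x) $ r * cnj (y $ r))"
    using y by (simp add: cscalar_prod_eq_sum[of _ N])
  also have "\<dots> = (\<Sum>r<N. \<Sum>s<N. Ind g $$ (r, s) * x $ s * cnj (y $ r))"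
    by (intro sum.cong refl)
      (simp only: mult_mat_vec_index_sum[OF induced_mat_carrier x] lessThan_iff sum_distrib_right)
  also have "\<dots> = (\<Sum>s<N. x $ s * (\<Sum>r<N. cnj (Ind (inv g) $$ (s, r) * y $ r)))"
    by (subst sum.swap) (auto simp: sum_distrib_left induced_mat_inv_index[OF g] intro!: sum.cong)
  also have "\<dots> = (\<Sum>s<N. x $ s * cnj ((Ind (inv g) *\<^sub>v y) $ s))"
    by (intro sum.cong refl)
      (simp only: mult_mat_vec_index_sum[OF induced_mat_carrier y] lessThan_iff cnj_sum)
  also have "\<dots> = x \<bullet>c (Ind (inv g) *\<^sub>v y)" by (simp add: cscalar_prod_eq_sum[of _ N])
  finally show ?thesis .
qed

lemma induced_mat_transversal_row:
  assumes i: "i < length ts" and k: "k < d" and s: "s < N"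
  shows "Ind (ts ! i) $$ (i * d + k, s) = (if s = k then 1 else 0)"
proof -
  have "i * d + k < Suc i * d" using k by simp
  also have "\<dots> \<le> N" using i by (intro mult_le_mono1) simp
  finally have r: "i * d + k < N" .
  have t: "ts ! i \<in> carrier G" "ts ! (s div d) \<in> carrier G"
    using transversal_carrier div_less_length i s by auto
  have "Ind (ts ! i) $$ (i * d + k, s)
      = (if ts ! (s div d) \<in> H then \<rho> (ts ! (s div d)) $$ (k, s mod d) else 0)"
    using induced_mat_index[OF t(1) r s] t k by (simp add: m_assoc[symmetric])
  also have "\<dots> = (if s < d then \<rho> \<one> $$ (k, s) else 0)"
    using transversal_in_subgroup_iff[OF div_less_length[OF s]] transversal_first k
    by (auto simp: div_eq_0_iff)
  finally show ?thesis using k rep_one by auto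
qed

lemma induced_mat_transversal_col:
  assumes i: "i < length ts" and k: "k < d" and r: "r < N"
  shows "Ind (ts ! i) $$ (r, k) = (if r = i * d + k then 1 else 0)"
proof -
  have s: "k < N" using k dim_le_N by linarith
  have t: "ts ! i \<in> carrier G" "ts ! (r div d) \<in> carrier G"
    using transversal_carrier div_less_length i r by auto
  have iff: "inv (ts ! (r div d)) \<otimes> ts ! i \<in> H \<longleftrightarrow> r div d = i"
    using transversal_unique[OF div_less_length[OF r] i t(1)] t subgroup.one_closed[OF subgroup] by auto
  have "Ind (ts ! i) $$ (r, k)
      = (if r div d = i then \<rho> (inv (ts ! (r div d)) \<otimes> ts ! i) $$ (r mod d, k) else 0)"
    using induced_mat_index[OF t(1) r s] iff t k transversal_first by simp
  also have "\<dots> = (if r div d = i then \<rho> \<one> $$ (r mod d, k) else 0)" using t by auto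
  also have "\<dots> = (if r = i * d + k then 1 else 0)"
    using rep_one mod_less_dim[OF r] k by (auto simp: div_mult_mod_eq)
  finally show ?thesis .
qed

lemma induced_mat_subgroup_row:
  assumes h: "h \<in> H" and k: "k < d" and s: "s < N"
  shows "Ind h $$ (k, s) = (if s < d then \<rho> h $$ (k, s) else 0)"
proof -
  have r: "k < N" using k dim_le_N by linarith
  have t: "ts ! (s div d) \<in> carrier G" using transversal_carrier div_less_length s by auto
  have "Ind h $$ (k, s) = (if h \<otimes> ts ! (s div d) \<in> H then \<rho> (h \<otimes> ts ! (s div d)) $$ (k, s mod d) else 0)"
    using induced_mat_index[OF subgroup_carrier[OF h] r s] k transversal_first subgroup_carrier[OF h]
    by (simp add: div_eq_0_iff)
  also have "\<dots> = (if s div d = 0 then \<rho> (h \<otimes> ts ! 0) $$ (k, s mod d) else 0)"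
    using subgroup_mult_left_iff[OF h t] transversal_in_subgroup_iff[OF div_less_length[OF s]] by auto
  finally show ?thesis using transversal_first subgroup_carrier[OF h] k by (simp add: div_eq_0_iff)
qed

lemma induced_mat_subgroup_col:
  assumes h: "h \<in> H" and l: "l < d" and r: "r < N"
  shows "Ind h $$ (r, l) = (if r < d then \<rho> h $$ (r, l) else 0)"
proof -
  have s: "l < N" using l dim_le_N by linarith
  have t: "ts ! (r div d) \<in> carrier G" using transversal_carrier div_less_length r by auto
  have "Ind h $$ (r, l) = (if inv (ts ! (r div d)) \<otimes> h \<in> H then \<rho> (inv (ts ! (r div d)) \<otimes> h) $$ (r mod d, l) else 0)"
    using induced_mat_index[OF subgroup_carrier[OF h] r s] l transversal_first subgroup_carrier[OF h] t
    by (simp add: div_eq_0_iff m_assoc)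
  also have "\<dots> = (if r div d = 0 then \<rho> (inv (ts ! 0) \<otimes> h) $$ (r mod d, l) else 0)"
    using subgroup_mult_right_iff[OF h inv_closed[OF t]] subgroup_inv_iff[OF t]
      transversal_in_subgroup_iff[OF div_less_length[OF r]] by auto
  finally show ?thesis using transversal_first subgroup_carrier[OF h] l by (simp add: div_eq_0_iff)
qed

lemma commutant_leading_block_commutes:
  assumes P: "P \<in> carrier_mat N N" and comm: "\<And>g. g \<in> carrier G \<Longrightarrow> Ind g * P = P * Ind g"
    and h: "h \<in> H"
  shows "mat d d (\<lambda>(k, l). P $$ (k, l)) * \<rho> h = \<rho> h * mat d d (\<lambda>(k, l). P $$ (k, l))"
    (is "?M * _ = _ * ?M")
proof (rule eq_matI)
  fix k l assume "k < dim_row (\<rho> h * ?M)" "l < dim_col (\<rho> h * ?M)"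
  hence k: "k < d" and l: "l < d" using rep_carrier[OF h] by auto
  have kN: "k < N" and lN: "l < N" using k l dim_le_N by linarith+
  have "(\<rho> h * ?M) $$ (k, l) = (\<Sum>s<d. \<rho> h $$ (k, s) * P $$ (s, l))"
    using mult_mat_index_sum[OF rep_carrier[OF h] _ k l, of ?M] l by simp
  also have "\<dots> = (\<Sum>s<N. if s < d then \<rho> h $$ (k, s) * P $$ (s, l) else 0)"
    by (rule sum_lessThan_if_less[OF dim_le_N, symmetric])
  also have "\<dots> = (\<Sum>s<N. Ind h $$ (k, s) * P $$ (s, l))"
    using induced_mat_subgroup_row[OF h k] by (intro sum.cong) auto
  also have "\<dots> = (Ind h * P) $$ (k, l)"
    by (rule mult_mat_index_sum[OF induced_mat_carrier P kN lN, symmetric])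
  also have "\<dots> = (P * Ind h) $$ (k, l)" using comm[OF subgroup_carrier[OF h]] by simp
  also have "\<dots> = (\<Sum>s<N. if s < d then P $$ (k, s) * \<rho> h $$ (s, l) else 0)"
    using mult_mat_index_sum[OF P induced_mat_carrier kN lN] induced_mat_subgroup_col[OF h l]
    by (auto intro!: sum.cong)
  also have "\<dots> = (\<Sum>s<d. P $$ (k, s) * \<rho> h $$ (s, l))"
    by (rule sum_lessThan_if_less[OF dim_le_N])
  also have "\<dots> = (?M * \<rho> h) $$ (k, l)"
    using mult_mat_index_sum[OF _ rep_carrier[OF h] k l, of ?M] k by simp
  finally show "(?M * \<rho> h) $$ (k, l) = (\<rho> h * ?M) $$ (k, l)" by simp
qed (use rep_carrier[OF h] in auto)

lemma commutant_diagonal_periodic: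
  assumes P: "P \<in> carrier_mat N N" and comm: "\<And>g. g \<in> carrier G \<Longrightarrow> Ind g * P = P * Ind g"
    and r: "r < N"
  shows "P $$ (r, r) = P $$ (r mod d, r mod d)"
proof -
  define i k where "i = r div d" and "k = r mod d"
  have i: "i < length ts" and k: "k < d" and r_eq: "r = i * d + k"
    unfolding i_def k_def using div_less_length[OF r] mod_less_dim[OF r] by auto
  have kN: "k < N" using k dim_le_N by linarith
  have t: "ts ! i \<in> carrier G" using transversal_carrier[OF i] .
  \<comment> \<open>Ind (ts ! i) maps the k-th coordinate vector to the r-th one.\<close>
  have "(Ind (ts ! i) * P) $$ (r, k) = (\<Sum>s<N. Ind (ts ! i) $$ (r, s) * P $$ (s, k))"
    by (rule mult_mat_index_sum[OF induced_mat_carrier P r kN])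
  also have "\<dots> = (\<Sum>s<N. if s = k then P $$ (k, k) else 0)"
    by (intro sum.cong) (auto simp: r_eq induced_mat_transversal_row[OF i k])
  finally have row: "(Ind (ts ! i) * P) $$ (r, k) = P $$ (k, k)" using kN by simp
  have "(P * Ind (ts ! i)) $$ (r, k) = (\<Sum>s<N. P $$ (r, s) * Ind (ts ! i) $$ (s, k))"
    by (rule mult_mat_index_sum[OF P induced_mat_carrier r kN])
  also have "\<dots> = (\<Sum>s<N. if s = r then P $$ (r, r) else 0)"
    by (intro sum.cong) (auto simp: r_eq induced_mat_transversal_col[OF i k])
  finally have col: "(P * Ind (ts ! i)) $$ (r, k) = P $$ (r, r)" using r by simp
  show ?thesis using row col comm[OF t] unfolding k_def by simp
qed

lemma commutant_scalar_diagonal: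
  assumes irr: "irreducible_rep H d \<rho>"
    and P: "P \<in> carrier_mat N N" and comm: "\<And>g. g \<in> carrier G \<Longrightarrow> Ind g * P = P * Ind g"
  obtains c where "\<And>r. r < N \<Longrightarrow> P $$ (r, r) = c"
    and "\<And>k l. k < d \<Longrightarrow> l < d \<Longrightarrow> P $$ (k, l) = (if k = l then c else 0)"
proof -
  obtain c where c: "mat d d (\<lambda>(k, l). P $$ (k, l)) = c \<cdot>\<^sub>m 1\<^sub>m d"
    using irreducible_rep_commutant_scalar[OF irr rep_carrier _ commutant_leading_block_commutes[OF P comm]]
    by auto
  have block: "P $$ (k, l) = (if k = l then c else 0)" if "k < d" "l < d" for k l
    using arg_cong[OF c, of "\<lambda>M. M $$ (k, l)"] that by simp
  show ?thesis
    by (rule that[OF _ block]) (use commutant_diagonal_periodic[OF P comm] block mod_less_dim in auto)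
qed

end

theorem proposition16:
  fixes G :: "('g, 'b) monoid_scheme" and H :: "'g set"
    and d :: nat and \<rho> :: "'g \<Rightarrow> complex mat"
    and ts :: "'g list" and V :: "complex vec set" and \<psi> :: "complex vec"
  assumes "group G" and "finite (carrier G)" and "subgroup H G"
    and "unitary_rep G H d \<rho>" and "irreducible_rep H d \<rho>"
    and "left_transversal G H ts"
    and "invariant_subspace (length ts * d) (carrier G) (induced_mat G H ts d \<rho>) V"
    and "\<psi> \<in> V" and "cscalar_prod \<psi> \<psi> = 1"
  shows "cscalar_prod (proj_e (length ts) d *\<^sub>v \<psi>) \<psi> \<in> \<real> \<and>
         Re (cscalar_prod (proj_e (length ts) d *\<^sub>v \<psi>) \<psi>)
           \<le> real (subspace_dim (length ts * d) V) / real (length ts * d)"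
proof -
  interpret induced_rep G H d \<rho> ts
    using assms unfolding induced_rep_def induced_rep_axioms_def by simp
  have V: "is_subspace N V" and V_inv: "\<And>g v. g \<in> carrier G \<Longrightarrow> v \<in> V \<Longrightarrow> Ind g *\<^sub>v v \<in> V"
    using assms(7) unfolding invariant_subspace_def by auto
  obtain us where "orthogonal_basis N V us" and dim_V: "length us = subspace_dim N V"
    using orthogonal_basis_exists[OF V] .
  then interpret orthogonal_basis N V us by simp
  have "\<And>g. g \<in> carrier G \<Longrightarrow> Ind g * proj = proj * Ind g"
    using proj_commute[OF induced_mat_carrier induced_mat_carrier induced_mat_adjoint V_inv V_inv] by blast
  then obtain c where diag: "\<And>r. r < N \<Longrightarrow> proj $$ (r, r) = c"
    and block: "\<And>k l. k < d \<Longrightarrow> l < d \<Longrightarrow> proj $$ (k, l) = (if k = l then c else 0)"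
    using commutant_scalar_diagonal[OF assms(5) proj_carrier] by blast
  have "of_nat (length us) = of_nat N * c" using trace_proj diag by simp
  hence c: "c = of_real (real (subspace_dim N V) / real N)"
    using dim_V transversal_nonempty assms(5) unfolding irreducible_rep_def by (simp add: field_simps)
  have \<psi>: "\<psi> \<in> carrier_vec N" using assms(8) V_closed(1) by auto
  show ?thesis
    using cscalar_prod_proj_e[OF \<psi> dim_le_N]
      leading_coordinates_weight_le[OF dim_le_N _ _ assms(8,9), of "real (subspace_dim N V) / real N"]
      block unfolding c by simp
qed

end
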